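(* Let $g\in H(\mathbb D)$, $\alpha\geq0$ and $\beta>0$. Then $S_g: H^{\infty}_\alpha\rightarrow H^{\infty}_\beta$ is bounded if and only if $$\sup_{z\in\mathbb D}(1-|z|^2)^{\beta-\alpha}|g(z)|<\infty\,.$$
   Context: $\mathbb D$ is the open unit disk and $H(\mathbb D)$ the space of analytic functions on $\mathbb D$. For $\alpha\geq0$, $H^{\infty}_\alpha=\{f\in H(\mathbb D): \|f\|_{H^\infty_\alpha}:=\sup_{z\in\mathbb D}(1-|z|^2)^\alpha|f(z)|<\infty\}$. For $g\in H(\mathbb D)$, $(S_gf)(z)=\int_0^z f'(\omega)g(\omega)\,d\omega$. *)

theory Defs
  imports "HOL-Complex_Analysis.Complex_Analysis"
begin

abbreviation unit_disk :: "complex set" where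
  "unit_disk \<equiv> ball 0 1"

definition weight :: "real \<Rightarrow> complex \<Rightarrow> real" where
  "weight a z = (1 - (norm z)^2) powr a"

definition Hinf :: "real \<Rightarrow> (complex \<Rightarrow> complex) set" where
  "Hinf a = {f. f holomorphic_on unit_disk \<and>
      (\<exists>C. \<forall>z\<in>unit_disk. weight a z * norm (f z) \<le> C)}"

definition Hinf_norm :: "real \<Rightarrow> (complex \<Rightarrow> complex) \<Rightarrow> real" where
  "Hinf_norm a f = (SUP z\<in>unit_disk. weight a z * norm (f z))"

definition S_op :: "(complex \<Rightarrow> complex) \<Rightarrow> (complex \<Rightarrow> complex) \<Rightarrow> complex \<Rightarrow> complex" where
  "S_op g f z = contour_integral (linepath 0 z) (\<lambda>w. deriv f w * g w)"

definition S_bounded :: "(complex \<Rightarrow> complex) \<Rightarrow> real \<Rightarrow> real \<Rightarrow> bool" where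
  "S_bounded g a b \<longleftrightarrow> (\<exists>C. \<forall>f\<in>Hinf a.
      S_op g f \<in> Hinf b \<and> Hinf_norm b (S_op g f) \<le> C * Hinf_norm a f)"

end

theory Submission
  imports Defs
begin

text \<open>Cauchy's estimate on the disk of radius (1 - |w|)/2 around w shows that differentiation
  maps H^\<infinity>_a into H^\<infinity>_(a+1); conversely, integrating along the radius [0, z] maps a
  derivative in H^\<infinity>_(\<beta>+1) back into H^\<infinity>_\<beta>, which is where \<beta> > 0 is needed. Since
  (S_g f)' = f' g, sufficiency follows by combining the two. For necessity, the test
  functions (a - z)(1 - conj(a) z)^(-(\<alpha>+1)) have H^\<infinity>_\<alpha>-norm at most 2^\<alpha> and derivative
  of modulus (1 - |a|^2)^(-(\<alpha>+1)) at z = a; Cauchy's estimate for S_g of them at a gives the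
  bound on g.\<close>

lemma one_minus_norm_sq_bounds:
  fixes z :: complex
  assumes "norm z \<le> 1"
  shows "1 - norm z \<le> 1 - (norm z)^2" and "1 - (norm z)^2 \<le> 2 * (1 - norm z)"
proof -
  have "norm z * norm z \<le> 1 * norm z"
    using assms by (intro mult_right_mono) auto
  then show "1 - norm z \<le> 1 - (norm z)^2" by (simp add: power2_eq_square)
  have "0 \<le> (1 - norm z)^2" by simp
  then show "1 - (norm z)^2 \<le> 2 * (1 - norm z)" by (simp add: power2_diff)
qed

lemma one_minus_norm_powr_le_weight:
  assumes "0 \<le> a" and "norm z < 1"
  shows "(1 - norm z) powr a \<le> weight a z"
  unfolding weight_def using assms one_minus_norm_sq_bounds(1)[of z]
  by (intro powr_mono2) auto

lemma weight_le_two_powr: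
  assumes "0 \<le> a" and "norm z < 1"
  shows "weight a z \<le> (2 * (1 - norm z)) powr a"
  unfolding weight_def using assms one_minus_norm_sq_bounds(2)[of z]
  by (intro powr_mono2) (auto simp: power_le_one)

lemma weight_nonneg [simp]: "0 \<le> weight a z"
  by (simp add: weight_def)

lemma weight_mult_weight: "weight a z * weight b z = weight (a + b) z"
  by (simp add: weight_def powr_add)

lemma nonneg_of_weighted_bound:
  assumes "\<forall>z\<in>unit_disk. weight a z * norm (f z) \<le> M"
  shows "0 \<le> M"
  using assms[rule_format, of 0] by (simp add: weight_def) (meson norm_ge_zero order_trans)

lemma Hinf_norm_upper:
  assumes "f \<in> Hinf a" and "z \<in> unit_disk"
  shows "weight a z * norm (f z) \<le> Hinf_norm a f"
proof -
  from assms(1) obtain C where "\<forall>z\<in>unit_disk. weight a z * norm (f z) \<le> C"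
    unfolding Hinf_def by auto
  then have "bdd_above ((\<lambda>z. weight a z * norm (f z)) ` unit_disk)"
    by (intro bdd_aboveI2) auto
  then show ?thesis
    unfolding Hinf_norm_def using assms(2) by (rule cSUP_upper2) simp
qed

lemma Hinf_norm_least:
  assumes "\<And>z. z \<in> unit_disk \<Longrightarrow> weight a z * norm (f z) \<le> B"
  shows "Hinf_norm a f \<le> B"
  unfolding Hinf_norm_def using assms by (intro cSUP_least) auto

lemma Hinf_norm_nonneg:
  assumes "f \<in> Hinf a"
  shows "0 \<le> Hinf_norm a f"
  using Hinf_norm_upper[OF assms] by (rule nonneg_of_weighted_bound[OF ballI])

lemma contour_integral_linepath_has_field_derivative:
  fixes f :: "complex \<Rightarrow> complex"
  assumes f: "f holomorphic_on S" and S: "convex S" "open S" "a \<in> S" and z: "z \<in> S"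
  shows "((\<lambda>z. contour_integral (linepath a z) f) has_field_derivative f z) (at z)"
proof (rule triangle_contour_integrals_starlike_primitive[OF _ S(3,2) z])
  show "continuous_on S f"
    using f holomorphic_on_imp_continuous_on by blast
  show "\<And>y. y \<in> S \<Longrightarrow> closed_segment a y \<subseteq> S"
    using S by (simp add: closed_segment_subset)
  fix b c assume bc: "closed_segment b c \<subseteq> S"
  have "(f has_contour_integral 0) (linepath a b +++ linepath b c +++ linepath c a)"
  proof (rule Cauchy_theorem_convex_simple[OF f S(1)])
    have "b \<in> S" "c \<in> S" using bc ends_in_segment by blast+
    then show "path_image (linepath a b +++ linepath b c +++ linepath c a) \<subseteq> S"
      using bc S by (simp add: path_image_join closed_segment_subset)
  qed auto
  then show "contour_integral (linepath a b) f + contour_integral (linepath b c) f +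
               contour_integral (linepath c a) f = 0"
    by (rule has_chain_integral_chain_integral3)
qed

lemma S_op_has_field_derivative:
  assumes f: "f holomorphic_on unit_disk" and g: "g holomorphic_on unit_disk"
    and w: "w \<in> unit_disk"
  shows "(S_op g f has_field_derivative deriv f w * g w) (at w)"
proof -
  have "(\<lambda>w. deriv f w * g w) holomorphic_on unit_disk"
    using f g by (intro holomorphic_on_mult holomorphic_deriv) auto
  from contour_integral_linepath_has_field_derivative[OF this convex_ball open_ball _ w]
  show ?thesis unfolding S_op_def[abs_def] by simp
qed

lemma S_op_holomorphic:
  assumes "f holomorphic_on unit_disk" and "g holomorphic_on unit_disk"
  shows "S_op g f holomorphic_on unit_disk"
  using S_op_has_field_derivative[OF assms] unfolding holomorphic_on_open[OF open_ball] by blast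

lemma weighted_deriv_bound:
  fixes F :: "complex \<Rightarrow> complex"
  assumes F: "F holomorphic_on unit_disk" and a: "0 \<le> a"
    and M: "\<forall>z\<in>unit_disk. weight a z * norm (F z) \<le> M" and w: "w \<in> unit_disk"
  shows "weight (a + 1) w * norm (deriv F w) \<le> 4 powr (a + 1) * M"
proof -
  define r where "r = (1 - norm w) / 2"
  have w1: "norm w < 1" and r0: "0 < r"
    using w by (auto simp: r_def)
  have sub: "cball w r \<subseteq> unit_disk"
  proof
    fix x assume "x \<in> cball w r"
    then have "norm x \<le> norm w + r"
      using norm_triangle_sub[of x w] by (simp add: dist_norm norm_minus_commute)
    then show "x \<in> unit_disk" using w1 by (simp add: r_def field_simps)
  qed
  have "norm (F x) \<le> M / r powr a" if x: "norm (w - x) = r" for x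
  proof -
    have xD: "x \<in> unit_disk" using sub x by (auto simp: dist_norm)
    have "norm x \<le> norm w + r"
      using norm_triangle_sub[of x w] x by (simp add: norm_minus_commute)
    then have "r \<le> 1 - norm x" by (simp add: r_def field_simps)
    then have "r powr a \<le> (1 - norm x) powr a"
      using r0 a by (intro powr_mono2) auto
    also have "\<dots> \<le> weight a x"
      using xD a by (intro one_minus_norm_powr_le_weight) auto
    finally have "r powr a * norm (F x) \<le> M"
      using M xD by (meson mult_right_mono norm_ge_zero order_trans)
    then show ?thesis using r0 by (simp add: field_simps)
  qed
  then have "norm ((deriv ^^ 1) F w) \<le> fact 1 * (M / r powr a) / r ^ 1"
    using holomorphic_on_subset[OF F] sub ball_subset_cball r0
    by (intro Cauchy_inequality holomorphic_on_imp_continuous_on) blast+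
  then have dF: "norm (deriv F w) \<le> M / r powr (a + 1)"
    using r0 by (simp add: powr_add field_simps)
  have "4 * r = 2 * (1 - norm w)" by (simp add: r_def)
  then have "weight (a + 1) w \<le> (4 * r) powr (a + 1)"
    using weight_le_two_powr[of "a + 1" w] w1 a by simp
  also have "\<dots> = 4 powr (a + 1) * r powr (a + 1)"
    using r0 by (simp add: powr_mult)
  finally have "weight (a + 1) w * norm (deriv F w)
      \<le> 4 powr (a + 1) * r powr (a + 1) * (M / r powr (a + 1))"
    using dF by (intro mult_mono) auto
  then show ?thesis using r0 by simp
qed

lemma has_real_derivative_one_minus_mult_powr:
  fixes r b t :: real
  assumes "0 < 1 - t * r"
  shows "((\<lambda>t. (1 - t * r) powr (-b)) has_real_derivative b * r * (1 - t * r) powr (-b - 1)) (at t)"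
proof -
  have "((\<lambda>t. (1 - t * r) powr (-b)) has_real_derivative
          (-b) * (1 - t * r) powr (-b - of_nat 1) * (- r)) (at t)"
    by (rule DERIV_fun_powr[of "\<lambda>t. 1 - t * r", OF _ assms]) (auto intro!: derivative_eq_intros)
  then show ?thesis by (simp add: mult_ac)
qed

lemma norm_le_of_radial_derivative_bound:
  fixes F h :: "complex \<Rightarrow> complex"
  assumes F0: "F 0 = 0"
    and dF: "\<And>w. w \<in> unit_disk \<Longrightarrow> (F has_field_derivative h w) (at w)"
    and h: "\<And>w. w \<in> unit_disk \<Longrightarrow> (1 - norm w) powr (\<beta> + 1) * norm (h w) \<le> C"
    and \<beta>: "0 < \<beta>" and z: "z \<in> unit_disk"
  shows "norm (F z) \<le> C / \<beta> * (1 - norm z) powr (-\<beta>)"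
proof -
  have C: "0 \<le> C" using h[of 0] by simp (meson norm_ge_zero order_trans)
  have z1: "norm z < 1" using z by simp
  define f where "f = (\<lambda>t::real. F (t *\<^sub>R z))"
  define \<phi> where "\<phi> = (\<lambda>t::real. C / \<beta> * (1 - t * norm z) powr (-\<beta>))"
  define \<phi>' where "\<phi>' = (\<lambda>t::real. C * norm z * (1 - t * norm z) powr (-\<beta> - 1))"
  have seg: "t *\<^sub>R z \<in> unit_disk" "norm (t *\<^sub>R z) = t * norm z" "0 < 1 - t * norm z"
    if "t \<in> {0..1}" for t
  proof -
    have "t * norm z \<le> 1 * norm z" using that by (intro mult_right_mono) auto
    then show "t *\<^sub>R z \<in> unit_disk" "norm (t *\<^sub>R z) = t * norm z" "0 < 1 - t * norm z"
      using that z1 by auto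
  qed
  have f': "(f has_vector_derivative z * h (t *\<^sub>R z)) (at t)" if "t \<in> {0..1}" for t
  proof -
    have "((\<lambda>t. t *\<^sub>R z) has_vector_derivative z) (at t)"
      by (auto intro!: derivative_eq_intros)
    from field_vector_diff_chain_at[OF this dF[OF seg(1)[OF that]]]
    show ?thesis by (simp add: f_def o_def)
  qed
  have \<phi>': "(\<phi> has_vector_derivative \<phi>' t) (at t)" if "t \<in> {0..1}" for t
    using DERIV_cmult[OF has_real_derivative_one_minus_mult_powr[OF seg(3)[OF that], of \<beta>], of "C / \<beta>"] \<beta>
    by (simp add: \<phi>_def \<phi>'_def has_real_derivative_iff_has_vector_derivative[symmetric] mult_ac)
  have "norm (z * h (t *\<^sub>R z)) \<le> \<phi>' t" if "t \<in> {0..1}" for t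
  proof -
    have "(1 - t * norm z) powr (\<beta> + 1) * norm (h (t *\<^sub>R z)) \<le> C"
      using h[OF seg(1)[OF that]] unfolding seg(2)[OF that] .
    then have "norm (h (t *\<^sub>R z)) \<le> C / (1 - t * norm z) powr (\<beta> + 1)"
      using seg(3)[OF that] by (simp add: field_simps)
    also have "\<dots> = C * (1 - t * norm z) powr (-\<beta> - 1)"
      using powr_minus[of "1 - t * norm z" "\<beta> + 1"] by (simp add: divide_inverse)
    finally have "norm z * norm (h (t *\<^sub>R z)) \<le> norm z * (C * (1 - t * norm z) powr (-\<beta> - 1))"
      by (rule mult_left_mono) simp
    then show ?thesis
      unfolding \<phi>'_def norm_mult by (simp add: mult_ac)
  qed
  moreover have "continuous_on {0..1} f" "continuous_on {0..1} \<phi>"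
    using f' \<phi>' by (meson continuous_on_vector_derivative has_vector_derivative_at_within)+
  ultimately have "norm (f 1 - f 0) \<le> \<phi> 1 - \<phi> 0"
    using f' \<phi>'
    by (intro differentiable_bound_general[where f' = "\<lambda>t. z * h (t *\<^sub>R z)" and \<phi>' = \<phi>']) auto
  then have "norm (F z) \<le> C / \<beta> * (1 - norm z) powr (-\<beta>) - C / \<beta>"
    by (simp add: f_def \<phi>_def F0)
  moreover have "0 \<le> C / \<beta>" using C \<beta> by simp
  ultimately show ?thesis by linarith
qed

lemma weighted_bound_of_derivative_bound:
  fixes F h :: "complex \<Rightarrow> complex"
  assumes F0: "F 0 = 0"
    and dF: "\<And>w. w \<in> unit_disk \<Longrightarrow> (F has_field_derivative h w) (at w)"
    and h: "\<And>w. w \<in> unit_disk \<Longrightarrow> weight (\<beta> + 1) w * norm (h w) \<le> C"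
    and \<beta>: "0 < \<beta>" and z: "z \<in> unit_disk"
  shows "weight \<beta> z * norm (F z) \<le> 2 powr \<beta> / \<beta> * C"
proof -
  have "(1 - norm w) powr (\<beta> + 1) * norm (h w) \<le> C" if w: "w \<in> unit_disk" for w
  proof -
    have "(1 - norm w) powr (\<beta> + 1) \<le> weight (\<beta> + 1) w"
      using w \<beta> by (intro one_minus_norm_powr_le_weight) auto
    then show ?thesis
      using h[OF w] by (meson mult_right_mono norm_ge_zero order_trans)
  qed
  then have F: "norm (F z) \<le> C / \<beta> * (1 - norm z) powr (-\<beta>)"
    using norm_le_of_radial_derivative_bound[OF F0 dF _ \<beta> z] by blast
  have z1: "norm z < 1" using z by simp
  have "weight \<beta> z * norm (F z) \<le> (2 * (1 - norm z)) powr \<beta> * (C / \<beta> * (1 - norm z) powr (-\<beta>))"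
    using weight_le_two_powr[of \<beta> z] F z1 \<beta> by (intro mult_mono) auto
  also have "\<dots> = 2 powr \<beta> / \<beta> * C"
    using z1 powr_mult[of 2 "1 - norm z" \<beta>] by (simp add: powr_minus field_simps)
  finally show ?thesis .
qed

lemma norm_diff_le_norm_one_minus_cnj_mult:
  fixes a z :: complex
  assumes "norm a \<le> 1" and "norm z \<le> 1"
  shows "norm (a - z) \<le> norm (1 - cnj a * z)"
proof -
  have "norm (1 - cnj a * z)^2 - norm (a - z)^2 = (1 - norm a^2) * (1 - norm z^2)"
    by (simp only: cmod_power2) (simp add: algebra_simps power2_eq_square)
  moreover have "0 \<le> (1 - norm a^2) * (1 - norm z^2)"
    using assms by (intro mult_nonneg_nonneg) (auto simp: power_le_one)
  ultimately have "norm (a - z)^2 \<le> norm (1 - cnj a * z)^2" by linarith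
  then show ?thesis by (rule power2_le_imp_le) simp
qed

lemma Re_one_minus_cnj_mult_pos:
  fixes a z :: complex
  assumes "norm a \<le> 1" and "norm z < 1"
  shows "0 < Re (1 - cnj a * z)"
proof -
  have "Re (cnj a * z) \<le> norm a * norm z"
    using complex_Re_le_cmod[of "cnj a * z"] by (simp add: norm_mult)
  also have "\<dots> \<le> norm z" using assms by (simp add: mult_left_le_one_le)
  finally show ?thesis using assms by simp
qed

lemma one_minus_norm_le_norm_one_minus_cnj_mult:
  fixes a z :: complex
  assumes "norm a \<le> 1"
  shows "1 - norm z \<le> norm (1 - cnj a * z)"
proof -
  have "norm a * norm z \<le> norm z" using assms by (simp add: mult_left_le_one_le)
  then show ?thesis
    using norm_triangle_ineq2[of 1 "cnj a * z"] by (simp add: norm_mult)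
qed

definition test_fun :: "real \<Rightarrow> complex \<Rightarrow> complex \<Rightarrow> complex" where
  "test_fun \<alpha> a z = (a - z) * (1 - cnj a * z) powr (- of_real (\<alpha> + 1))"

lemma test_fun_has_field_derivative:
  fixes \<alpha> :: real and p :: complex
  defines "p \<equiv> - of_real (\<alpha> + 1)"
  assumes "norm a \<le> 1" and "norm z < 1"
  shows "(test_fun \<alpha> a has_field_derivative
     - ((1 - cnj a * z) powr p) + (a - z) * (p * (1 - cnj a * z) powr (p - 1) * (- cnj a))) (at z)"
proof -
  have "1 - cnj a * z \<notin> \<real>\<^sub>\<le>\<^sub>0"
    using Re_one_minus_cnj_mult_pos[OF assms(2,3)] by (auto simp: complex_nonpos_Reals_iff)
  moreover have "((\<lambda>z. 1 - cnj a * z) has_field_derivative - cnj a) (at z)"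
    by (auto intro!: derivative_eq_intros)
  ultimately have d: "((\<lambda>z. (1 - cnj a * z) powr p) has_field_derivative
          p * (1 - cnj a * z) powr (p - 1) * (- cnj a)) (at z)"
    using DERIV_chain2[of "\<lambda>w. w powr p" _ "\<lambda>z. 1 - cnj a * z"] has_field_derivative_powr
    by blast
  have "((\<lambda>z. a - z) has_field_derivative -1) (at z)"
    by (auto intro!: derivative_eq_intros)
  from DERIV_mult[OF this d] show ?thesis
    unfolding test_fun_def[abs_def] p_def by (simp add: algebra_simps)
qed

lemma test_fun_holomorphic:
  assumes "norm a \<le> 1"
  shows "test_fun \<alpha> a holomorphic_on unit_disk"
  using test_fun_has_field_derivative[OF assms]
  unfolding holomorphic_on_open[OF open_ball] by fastforce

lemma weight_mult_norm_test_fun_le: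
  assumes \<alpha>: "0 \<le> \<alpha>" and a: "norm a \<le> 1" and z: "norm z < 1"
  shows "weight \<alpha> z * norm (test_fun \<alpha> a z) \<le> 2 powr \<alpha>"
proof -
  define u where "u = 1 - cnj a * z"
  have "u \<noteq> 0"
    using Re_one_minus_cnj_mult_pos[OF a z] unfolding u_def by (metis zero_complex.sel(1) less_irrefl)
  then have u0: "0 < norm u" by simp
  have "norm (test_fun \<alpha> a z) = norm (a - z) * norm u powr (- (\<alpha> + 1))"
    by (simp add: test_fun_def u_def norm_mult norm_powr_real_powr')
  also have "\<dots> \<le> norm u * norm u powr (- (\<alpha> + 1))"
    using norm_diff_le_norm_one_minus_cnj_mult[of a z] a z
    by (intro mult_right_mono) (auto simp: u_def)
  also have "\<dots> = norm u powr (-\<alpha>)"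
    using u0 powr_add[of "norm u" 1 "- (\<alpha> + 1)"] by simp
  finally have f: "norm (test_fun \<alpha> a z) \<le> norm u powr (-\<alpha>)" .
  have "weight \<alpha> z \<le> (2 * (1 - norm z)) powr \<alpha>"
    using \<alpha> z by (rule weight_le_two_powr)
  also have "\<dots> \<le> (2 * norm u) powr \<alpha>"
    using one_minus_norm_le_norm_one_minus_cnj_mult[OF a, of z] z \<alpha>
    by (intro powr_mono2) (auto simp: u_def)
  finally have "weight \<alpha> z * norm (test_fun \<alpha> a z) \<le> (2 * norm u) powr \<alpha> * norm u powr (-\<alpha>)"
    using f by (intro mult_mono) auto
  also have "\<dots> = 2 powr \<alpha>"
    using u0 by (simp add: powr_mult powr_minus)
  finally show ?thesis .
qed

lemma test_fun_in_Hinf: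
  assumes "0 \<le> \<alpha>" and "norm a \<le> 1"
  shows "test_fun \<alpha> a \<in> Hinf \<alpha>" and "Hinf_norm \<alpha> (test_fun \<alpha> a) \<le> 2 powr \<alpha>"
  using test_fun_holomorphic[OF assms(2)] weight_mult_norm_test_fun_le[OF assms]
  by (auto simp: Hinf_def intro!: Hinf_norm_least exI[of _ "2 powr \<alpha>"])

lemma norm_deriv_test_fun_centre:
  assumes "norm a < 1"
  shows "norm (deriv (test_fun \<alpha> a) a) = weight (- (\<alpha> + 1)) a"
proof -
  have "1 - cnj a * a = of_real (1 - (norm a)^2)"
    using complex_norm_square[of a] by (simp add: mult.commute)
  moreover have "0 < 1 - (norm a)^2"
    using assms by (simp add: power_less_one_iff abs_square_less_1)
  ultimately have u: "norm (1 - cnj a * a) = 1 - (norm a)^2"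
    by (metis norm_of_real abs_of_pos)
  have "deriv (test_fun \<alpha> a) a = - ((1 - cnj a * a) powr (- of_real (\<alpha> + 1)))"
    using DERIV_imp_deriv[OF test_fun_has_field_derivative[of a a \<alpha>]] assms by simp
  then have "norm (deriv (test_fun \<alpha> a) a) = norm (1 - cnj a * a) powr (- (\<alpha> + 1))"
    by (simp add: norm_powr_real_powr')
  then show ?thesis
    unfolding u weight_def .
qed

lemma S_bounded_imp_weighted_bound:
  assumes g: "g holomorphic_on unit_disk" and \<alpha>: "0 \<le> \<alpha>" and \<beta>: "0 \<le> \<beta>"
    and "S_bounded g \<alpha> \<beta>"
  shows "\<exists>C. \<forall>z\<in>unit_disk. weight (\<beta> - \<alpha>) z * norm (g z) \<le> C"
proof -
  obtain C where C: "\<And>f. f \<in> Hinf \<alpha> \<Longrightarrow> S_op g f \<in> Hinf \<beta> \<and> Hinf_norm \<beta> (S_op g f) \<le> C * Hinf_norm \<alpha> f"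
    using \<open>S_bounded g \<alpha> \<beta>\<close> unfolding S_bounded_def by blast
  have "weight (\<beta> - \<alpha>) a * norm (g a) \<le> 4 powr (\<beta> + 1) * (\<bar>C\<bar> * 2 powr \<alpha>)"
    if aD: "a \<in> unit_disk" for a
  proof -
    define f where "f = test_fun \<alpha> a"
    have a1: "norm a < 1" using aD by simp
    have f: "f \<in> Hinf \<alpha>" "Hinf_norm \<alpha> f \<le> 2 powr \<alpha>"
      using test_fun_in_Hinf[OF \<alpha>, of a] a1 by (simp_all add: f_def)
    have "Hinf_norm \<beta> (S_op g f) \<le> \<bar>C\<bar> * 2 powr \<alpha>"
    proof -
      have "C * Hinf_norm \<alpha> f \<le> \<bar>C\<bar> * Hinf_norm \<alpha> f"
        using Hinf_norm_nonneg[OF f(1)] by (intro mult_right_mono) auto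
      also have "\<dots> \<le> \<bar>C\<bar> * 2 powr \<alpha>"
        using f(2) by (intro mult_left_mono) auto
      finally show ?thesis using C[OF f(1)] by linarith
    qed
    then have "\<forall>z\<in>unit_disk. weight \<beta> z * norm (S_op g f z) \<le> \<bar>C\<bar> * 2 powr \<alpha>"
      using Hinf_norm_upper C[OF f(1)] by (meson order_trans)
    from weighted_deriv_bound[OF S_op_holomorphic[OF _ g] \<beta> this aD]
    have "weight (\<beta> + 1) a * (weight (- (\<alpha> + 1)) a * norm (g a)) \<le> 4 powr (\<beta> + 1) * (\<bar>C\<bar> * 2 powr \<alpha>)"
      using f(1) DERIV_imp_deriv[OF S_op_has_field_derivative[OF _ g aD], of f]
      by (simp add: Hinf_def f_def norm_mult norm_deriv_test_fun_centre[OF a1])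
    moreover have "weight (\<beta> + 1) a * weight (- (\<alpha> + 1)) a = weight (\<beta> - \<alpha>) a"
      by (simp add: weight_mult_weight)
    ultimately show ?thesis by (metis mult.assoc)
  qed
  then show ?thesis by blast
qed

lemma weighted_bound_imp_S_bounded:
  assumes g: "g holomorphic_on unit_disk" and \<alpha>: "0 \<le> \<alpha>" and \<beta>: "0 < \<beta>"
    and K: "\<forall>z\<in>unit_disk. weight (\<beta> - \<alpha>) z * norm (g z) \<le> K"
  shows "S_bounded g \<alpha> \<beta>"
  unfolding S_bounded_def
proof (intro exI ballI)
  fix f assume f: "f \<in> Hinf \<alpha>"
  define M where "M = Hinf_norm \<alpha> f"
  have fH: "f holomorphic_on unit_disk" using f by (simp add: Hinf_def)
  have M: "\<forall>z\<in>unit_disk. weight \<alpha> z * norm (f z) \<le> M"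
    using Hinf_norm_upper[OF f] by (simp add: M_def)
  have "weight (\<beta> + 1) w * norm (deriv f w * g w) \<le> 4 powr (\<alpha> + 1) * M * K"
    if w: "w \<in> unit_disk" for w
  proof -
    have "(weight (\<alpha> + 1) w * norm (deriv f w)) * (weight (\<beta> - \<alpha>) w * norm (g w))
          \<le> (4 powr (\<alpha> + 1) * M) * K"
      by (rule mult_mono[OF weighted_deriv_bound[OF fH \<alpha> M w] K[rule_format, OF w]])
        (use nonneg_of_weighted_bound[OF M] in auto)
    moreover have "weight (\<alpha> + 1) w * weight (\<beta> - \<alpha>) w = weight (\<beta> + 1) w"
      by (simp add: weight_mult_weight add_ac)
    ultimately show ?thesis
      by (simp add: norm_mult mult_ac)
  qed
  from weighted_bound_of_derivative_bound[OF _ S_op_has_field_derivative[OF fH g] this \<beta>]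
  have bound: "weight \<beta> z * norm (S_op g f z) \<le> 4 powr (\<alpha> + 1) * K * 2 powr \<beta> / \<beta> * M"
    if "z \<in> unit_disk" for z
    using that by (simp add: S_op_def mult_ac)
  show "S_op g f \<in> Hinf \<beta> \<and>
      Hinf_norm \<beta> (S_op g f) \<le> 4 powr (\<alpha> + 1) * K * 2 powr \<beta> / \<beta> * Hinf_norm \<alpha> f"
    using S_op_holomorphic[OF fH g] bound unfolding Hinf_def M_def by (blast intro: Hinf_norm_least)
qed

theorem theorem3:
  fixes g :: "complex \<Rightarrow> complex" and \<alpha> \<beta> :: real
  assumes "g holomorphic_on unit_disk" and "\<alpha> \<ge> 0" and "\<beta> > 0"
  shows "S_bounded g \<alpha> \<beta> \<longleftrightarrow>
    (\<exists>C. \<forall>z\<in>unit_disk. (1 - (norm z)^2) powr (\<beta> - \<alpha>) * norm (g z) \<le> C)"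
  using S_bounded_imp_weighted_bound[OF assms(1,2)] weighted_bound_imp_S_bounded[OF assms]
    assms(3) unfolding weight_def by fastforce

end
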